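(* Let $P=\mathrm{conv}(\bm{x}_1,\dots,\bm{x}_m)$ be a polytope in $\mathbb{R}^k$ with each $\bm{x}_i$ of unit Euclidean length. Then the maximum volume ellipsoid $E(P)$ contained in $P$ satisfies $\mathrm{vol}(E(P))\le 2\sqrt{2e}\left(\sqrt{\frac{2\log 2m}{k}}\right)^k\mathrm{vol}(B_k(0,1))$.
   Context: $B_k(0,1)$ is the unit Euclidean ball in $\mathbb{R}^k$; $\mathrm{vol}$ is $k$-dimensional volume; $\log$ is the natural logarithm. *)

theory Defs
  imports "HOL-Analysis.Analysis"
begin

definition is_ellipsoid :: "'a::euclidean_space set \<Rightarrow> bool" where
  "is_ellipsoid E \<longleftrightarrow> (\<exists>c (A::'a \<Rightarrow> 'a). linear A \<and> inj A \<and> E = (\<lambda>u. c + A u) ` cball 0 1)"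

definition max_vol_ellipsoid :: "'a::euclidean_space set \<Rightarrow> 'a set \<Rightarrow> bool" where
  "max_vol_ellipsoid P E \<longleftrightarrow> is_ellipsoid E \<and> E \<subseteq> P \<and>
     (\<forall>E'. is_ellipsoid E' \<and> E' \<subseteq> P \<longrightarrow> measure lebesgue E' \<le> measure lebesgue E)"

end

(*
  Every ellipsoid E = c + A(B) inside P obeys the bound, even without the factor 2 sqrt(2e) >= 1.  Choose an orthonormal basis (q_j) whose images A q_j are
  pairwise orthogonal, of lengths s_j > 0; then vol E = (prod_j s_j) vol B.  With w_j = A q_j / s_j,
  averaging sum_i 2 cosh (t <x_i, u>) over the 2^k sign vectors u = sum_j e_j w_j and using
  cosh x <= exp(x^2 / 2) yields signs with |<x_i, u>| <= t = sqrt (2 log 2m) for all i, so P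
  lies in the slab |<p, u>| <= t.  But E contains c +- A z for z = sum_j e_j s_j q_j / S with
  S = sqrt (sum_j s_j^2), and <A z, u> = S.  Hence sum_j s_j^2 <= 2 log 2m, and AM-GM gives
  prod_j s_j <= (2 log 2m / k)^(k/2).
*)
theory Submission
  imports Defs "HOL-Probability.Hoeffding"
begin

section \<open>Sign vectors with small inner products\<close>

lemma cosh_le_exp_half_square:
  fixes x :: real
  shows "cosh x \<le> exp (x\<^sup>2 / 2)"
proof -
  define y where "y = \<bar>x\<bar>"
  have "cosh x = cosh y"
    by (simp add: y_def abs_if)
  also have "\<dots> = exp (- y) * ((1 + exp (2 * y)) / 2)"
    by (simp add: cosh_field_def ring_distribs add_divide_distrib flip: exp_add)
  also have "\<dots> = exp (ln ((1 + exp (2 * y)) / 2) - y)"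
    by (simp add: exp_diff exp_minus add_pos_pos field_simps)
  also have "\<dots> \<le> exp (y\<^sup>2 / 2)"
    using Hoeffdings_lemma_aux[of "2 * y" "1/2"]
    by (simp add: y_def field_simps power2_eq_square)
  finally show ?thesis by (simp add: y_def)
qed

lemma exists_le_of_sum_le:
  fixes f :: "'a \<Rightarrow> real"
  assumes "finite A" "A \<noteq> {}" "sum f A \<le> real (card A) * c"
  shows "\<exists>a\<in>A. f a \<le> c"
proof (rule ccontr)
  assume "\<not> ?thesis"
  then have "(\<Sum>a\<in>A. c) < sum f A"
    using assms(1,2) by (intro sum_strict_mono) auto
  with assms(3) show False by simp
qed

definition sign_vectors :: "('n::finite \<Rightarrow> real) set" where
  "sign_vectors = PiE UNIV (\<lambda>_. {-1, 1})"

lemma finite_sign_vectors: "finite sign_vectors"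
  unfolding sign_vectors_def by (intro finite_PiE) auto

lemma card_sign_vectors: "card (sign_vectors :: ('n::finite \<Rightarrow> real) set) = 2 ^ CARD('n)"
  unfolding sign_vectors_def by (subst card_PiE) (auto simp: numeral_2_eq_2)

lemma sign_vectors_nonempty: "sign_vectors \<noteq> {}"
  unfolding sign_vectors_def by (auto simp: PiE_eq_empty_iff)

lemma sum_sign_vectors_exp_le:
  fixes a :: "real^'n"
  shows "(\<Sum>f\<in>sign_vectors. exp (l * (\<Sum>j\<in>UNIV. a$j * f j)))
           \<le> 2 ^ CARD('n) * exp (l\<^sup>2 * (norm a)\<^sup>2 / 2)"
proof -
  have "(\<Sum>f\<in>sign_vectors. exp (l * (\<Sum>j\<in>UNIV. a$j * f j)))
          = (\<Sum>f\<in>sign_vectors. \<Prod>j\<in>UNIV. exp (l * a$j * f j))"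
    by (simp add: sum_distrib_left exp_sum mult.assoc)
  also have "\<dots> = (\<Prod>j\<in>UNIV. \<Sum>y\<in>{-1::real, 1}. exp (l * a$j * y))"
    unfolding sign_vectors_def by (rule prod_sum_PiE[symmetric]) auto
  also have "\<dots> = (\<Prod>j\<in>UNIV. 2 * cosh (l * a$j))"
    by (intro prod.cong refl) (simp add: cosh_field_def)
  also have "\<dots> \<le> (\<Prod>j\<in>UNIV. 2 * exp ((l * a$j)\<^sup>2 / 2))"
    by (intro prod_mono conjI mult_left_mono cosh_le_exp_half_square) auto
  also have "\<dots> = 2 ^ CARD('n) * exp (l\<^sup>2 * (\<Sum>j\<in>UNIV. (a$j)\<^sup>2) / 2)"
    by (simp add: prod.distrib exp_sum power_mult_distrib sum_distrib_left sum_divide_distrib)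
  also have "(\<Sum>j\<in>UNIV. (a$j)\<^sup>2) = (norm a)\<^sup>2"
    by (simp add: norm_vec_def L2_set_def sum_nonneg)
  finally show ?thesis .
qed

lemma exists_sign_vector_small_inner:
  fixes a :: "nat \<Rightarrow> real^'n"
  assumes "m \<ge> 1" and "\<And>i. i < m \<Longrightarrow> norm (a i) = 1"
  shows "\<exists>e::real^'n. (\<forall>j. \<bar>e$j\<bar> = 1) \<and>
           (\<forall>i<m. \<bar>a i \<bullet> e\<bar> \<le> sqrt (2 * ln (2 * real m)))"
proof -
  define t where "t = sqrt (2 * ln (2 * real m))"
  have t: "t > 0" "t\<^sup>2 = 2 * ln (2 * real m)" "exp (t\<^sup>2 / 2) = 2 * real m"
    using assms(1) by (simp_all add: t_def)
  define y where "y i f = (\<Sum>j\<in>UNIV. a i $ j * f j)" for i and f :: "'n \<Rightarrow> real"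
  define F where "F f = (\<Sum>i<m. exp (t * y i f) + exp (t * (- y i f)))" for f
  have exp_sum_le: "(\<Sum>f\<in>sign_vectors. exp (t * (\<Sum>j\<in>UNIV. b $ j * f j)))
                      \<le> 2 ^ CARD('n) * exp (t\<^sup>2 / 2)"
    if "norm b = 1" for b :: "real^'n"
    using sum_sign_vectors_exp_le[of t b] that by simp
  have "(\<Sum>f\<in>sign_vectors. F f)
          = (\<Sum>i<m. (\<Sum>f\<in>sign_vectors. exp (t * (\<Sum>j\<in>UNIV. a i $ j * f j)))
                    + (\<Sum>f\<in>sign_vectors. exp (t * (\<Sum>j\<in>UNIV. (- a i) $ j * f j))))"
    unfolding F_def y_def by (subst sum.swap) (simp add: sum.distrib sum_negf)
  also have "\<dots> \<le> (\<Sum>i<m. 2 ^ CARD('n) * exp (t\<^sup>2 / 2) + 2 ^ CARD('n) * exp (t\<^sup>2 / 2))"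
    using assms(2) by (intro sum_mono add_mono exp_sum_le) auto
  also have "\<dots> = real (card (sign_vectors :: ('n \<Rightarrow> real) set)) * (2 * real m)\<^sup>2"
    unfolding t(3) by (simp add: card_sign_vectors power2_eq_square)
  finally obtain f where f: "f \<in> sign_vectors" "F f \<le> (2 * real m)\<^sup>2"
    using exists_le_of_sum_le[OF finite_sign_vectors sign_vectors_nonempty] by blast
  have "\<bar>y i f\<bar> \<le> t" if "i < m" for i
  proof -
    have "exp (t * \<bar>y i f\<bar>) \<le> exp (t * y i f) + exp (t * (- y i f))"
      by (cases "y i f \<ge> 0") simp_all
    also have "\<dots> \<le> F f"
      unfolding F_def using that by (intro member_le_sum) auto
    also have "\<dots> \<le> exp (t\<^sup>2 / 2) ^ 2"
      using f(2) t(3) by simp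
    also have "\<dots> = exp (t * t)"
      by (simp add: power2_eq_square flip: exp_add)
    finally have "t * \<bar>y i f\<bar> \<le> t * t" by simp
    then show ?thesis using t(1) by simp
  qed
  moreover have "\<bar>f j\<bar> = 1" for j
    using f(1) unfolding sign_vectors_def PiE_iff by (metis UNIV_I abs_minus_cancel abs_one insertE singletonD)
  ultimately show ?thesis
    by (intro exI[of _ "\<chi> j. f j"]) (simp add: y_def t_def inner_vec_def mult.commute)
qed

section \<open>Orthogonalising the columns of a matrix\<close>

lemma indefinite_form_on_unit_circle:
  fixes d \<beta> g :: real
  assumes "d \<noteq> 0" "g \<noteq> 0"
  shows "\<exists>c s. c\<^sup>2 + s\<^sup>2 = 1 \<and> d * (s\<^sup>2 * \<beta> + 2 * c * s * g) > 0"
proof -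
  \<comment> \<open>(c, s) will be a unit eigenvector of the matrix [[0, g], [g, \<beta>]] of the form, for its
      eigenvalue \<mu> of the same sign as d.\<close>
  define \<mu> where "\<mu> = (\<beta> + sgn d * sqrt (\<beta>\<^sup>2 + 4 * g\<^sup>2)) / 2"
  have root: "\<mu>\<^sup>2 = \<beta> * \<mu> + g\<^sup>2"
    unfolding \<mu>_def using assms(1)
    by (simp add: power2_eq_square field_simps sgn_if add_nonneg_nonneg)
  have "\<bar>\<beta>\<bar> < sqrt (\<beta>\<^sup>2 + 4 * g\<^sup>2)"
    using assms(2) by (intro real_less_rsqrt) simp
  then have d_\<mu>: "d * \<mu> > 0"
    unfolding \<mu>_def using assms(1) by (cases "d > 0") (auto simp: mult_less_0_iff zero_less_mult_iff)
  define r where "r = sqrt (g\<^sup>2 + \<mu>\<^sup>2)"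
  have r: "r > 0" "r\<^sup>2 = g\<^sup>2 + \<mu>\<^sup>2"
    using assms(2) by (simp_all add: r_def add_pos_nonneg)
  have "(\<mu> / r)\<^sup>2 * \<beta> + 2 * (g / r) * (\<mu> / r) * g = \<mu> * (\<beta> * \<mu> + 2 * g\<^sup>2) / r\<^sup>2"
    by (simp add: power2_eq_square add_divide_distrib algebra_simps)
  also have "\<beta> * \<mu> + 2 * g\<^sup>2 = r\<^sup>2"
    using root r(2) by linarith
  also have "\<mu> * r\<^sup>2 / r\<^sup>2 = \<mu>"
    using r(1) by simp
  finally have "d * ((\<mu> / r)\<^sup>2 * \<beta> + 2 * (g / r) * (\<mu> / r) * g) > 0"
    using d_\<mu> by simp
  moreover have "(g / r)\<^sup>2 + (\<mu> / r)\<^sup>2 = 1"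
    using r assms(2) by (simp add: power_divide add_divide_distrib[symmetric])
  ultimately show ?thesis by blast
qed

definition rotate_columns :: "'n \<Rightarrow> 'n \<Rightarrow> real \<Rightarrow> real \<Rightarrow> real^'n^'m \<Rightarrow> real^'n^'m" where
  "rotate_columns j l c s Q = (\<chi> k p. if p = j then c * Q$k$j + s * Q$k$l
                                       else if p = l then c * Q$k$l - s * Q$k$j else Q$k$p)"

lemma column_rotate_columns:
  assumes "j \<noteq> l"
  shows "column p (rotate_columns j l c s Q) =
           (if p = j then c *\<^sub>R column j Q + s *\<^sub>R column l Q
            else if p = l then c *\<^sub>R column l Q - s *\<^sub>R column j Q else column p Q)"
  using assms by (auto simp: vec_eq_iff column_def rotate_columns_def)

lemma orthogonal_matrix_rotate_columns:
  fixes Q :: "real^'n^'n"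
  assumes Q: "orthogonal_matrix Q" and "j \<noteq> l" and "c\<^sup>2 + s\<^sup>2 = 1"
  shows "orthogonal_matrix (rotate_columns j l c s Q)"
proof -
  have unit: "column p Q \<bullet> column p Q = 1" for p
    using Q by (simp add: orthogonal_matrix_orthonormal_columns norm_eq_1)
  have orth: "column p Q \<bullet> column q Q = 0" if "p \<noteq> q" for p q
    using Q that by (simp add: orthogonal_matrix_orthonormal_columns orthogonal_def)
  note inner_simps = inner_add_left inner_add_right inner_diff_left inner_diff_right
  have "column p (rotate_columns j l c s Q) \<bullet> column q (rotate_columns j l c s Q) = (if p = q then 1 else 0)" for p q
    using assms(2,3) unit orth[of j l] orth[of l j] orth[of p q] orth[of p j] orth[of p l] orth[of j q] orth[of l q]
    by (auto simp: column_rotate_columns inner_simps power2_eq_square algebra_simps)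
  then show ?thesis
    by (simp add: orthogonal_matrix_orthonormal_columns norm_eq_1 orthogonal_def)
qed

lemma compact_orthogonal_matrices: "compact {Q::real^'n^'n. orthogonal_matrix Q}"
proof (rule compact_eq_bounded_closed[THEN iffD2], rule conjI)
  have "norm Q \<le> real CARD('n)" if "orthogonal_matrix Q" for Q :: "real^'n^'n"
  proof -
    have "norm Q \<le> (\<Sum>i\<in>UNIV. norm (Q$i))"
      unfolding norm_vec_def by (rule L2_set_le_sum) auto
    also have "\<dots> = real CARD('n)"
      using that by (simp add: orthogonal_matrix_orthonormal_rows row_def)
    finally show ?thesis .
  qed
  then show "bounded {Q::real^'n^'n. orthogonal_matrix Q}"
    unfolding bounded_iff by blast
  have "{Q::real^'n^'n. orthogonal_matrix Q} = (\<Inter>i. \<Inter>j. {Q. (\<Sum>k\<in>UNIV. Q$k$i * Q$k$j) = mat 1 $ i $ j})"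
    by (auto simp: orthogonal_matrix vec_eq_iff matrix_matrix_mult_def transpose_def)
  also have "closed \<dots>"
    by (intro closed_INT ballI closed_Collect_eq continuous_intros)
  finally show "closed {Q::real^'n^'n. orthogonal_matrix Q}" .
qed

lemma column_matrix_mult: "column j (A ** B) = A *v column j B"
  by (simp add: vec_eq_iff column_def matrix_matrix_mult_def matrix_vector_mult_def)

lemma weighted_column_norms_rotate_columns:
  fixes M Q :: "real^'n^'n" and r :: "'n \<Rightarrow> real"
  assumes "j \<noteq> l" and "c\<^sup>2 + s\<^sup>2 = 1"
  defines "a \<equiv> M *v column j Q" and "b \<equiv> M *v column l Q"
  shows "(\<Sum>p\<in>UNIV. r p * (norm (M *v column p (rotate_columns j l c s Q)))\<^sup>2)
           - (\<Sum>p\<in>UNIV. r p * (norm (M *v column p Q))\<^sup>2)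
         = (r j - r l) * (s\<^sup>2 * ((norm b)\<^sup>2 - (norm a)\<^sup>2) + 2 * c * s * (a \<bullet> b))"
proof -
  define Q' where "Q' = rotate_columns j l c s Q"
  define h where "h p = r p * ((norm (M *v column p Q'))\<^sup>2 - (norm (M *v column p Q))\<^sup>2)" for p
  have "(\<Sum>p\<in>UNIV. r p * (norm (M *v column p Q'))\<^sup>2) - (\<Sum>p\<in>UNIV. r p * (norm (M *v column p Q))\<^sup>2)
          = (\<Sum>p\<in>UNIV. h p)"
    by (simp add: h_def sum_subtractf right_diff_distrib)
  also have "\<dots> = h j + h l"
    using assms(1) by (subst sum.mono_neutral_right[of UNIV "{j, l}"]) (auto simp: h_def Q'_def column_rotate_columns)
  moreover have "M *v column j Q' = c *\<^sub>R a + s *\<^sub>R b" "M *v column l Q' = c *\<^sub>R b - s *\<^sub>R a"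
    using assms(1) by (simp_all add: Q'_def a_def b_def column_rotate_columns
        matrix_vector_right_distrib matrix_vector_mult_diff_distrib matrix_vector_mult_scaleR)
  moreover have "(norm (c *\<^sub>R a + s *\<^sub>R b))\<^sup>2 = c\<^sup>2 * (norm a)\<^sup>2 + s\<^sup>2 * (norm b)\<^sup>2 + 2 * c * s * (a \<bullet> b)"
    "(norm (c *\<^sub>R b - s *\<^sub>R a))\<^sup>2 = c\<^sup>2 * (norm b)\<^sup>2 + s\<^sup>2 * (norm a)\<^sup>2 - 2 * c * s * (a \<bullet> b)"
    unfolding power2_norm_eq_inner
    by (simp_all add: inner_add_left inner_add_right inner_diff_left inner_diff_right
        inner_commute[of b a] power2_eq_square algebra_simps)
  moreover have "c\<^sup>2 = 1 - s\<^sup>2"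
    using assms(2) by simp
  ultimately show ?thesis
    by (simp add: h_def Q'_def flip: a_def b_def) (simp add: algebra_simps)
qed

lemma exists_orthogonal_matrix_orthogonal_columns:
  fixes M :: "real^'n^'n"
  obtains Q where "orthogonal_matrix Q"
    and "\<And>j l. j \<noteq> l \<Longrightarrow> column j (M ** Q) \<bullet> column l (M ** Q) = 0"
proof -
  \<comment> \<open>A maximiser of the weighted sum g, with pairwise distinct weights, has orthogonal image
      columns: otherwise a rotation in the plane of two of its columns increases g.\<close>
  obtain w :: "'n \<Rightarrow> nat" where "inj w" by auto
  define r where "r p = real (w p)" for p
  define g where "g Q = (\<Sum>p\<in>UNIV. r p * (norm (M *v column p Q))\<^sup>2)" for Q :: "real^'n^'n"
  define K where "K = {Q::real^'n^'n. orthogonal_matrix Q}"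
  have "continuous_on K g"
    unfolding g_def column_def matrix_vector_mult_def by (intro continuous_intros)
  then obtain Q where "Q \<in> K" and Q_max: "\<And>Q'. Q' \<in> K \<Longrightarrow> g Q' \<le> g Q"
    using continuous_attains_sup[OF compact_orthogonal_matrices[folded K_def]] orthogonal_matrix_id
    unfolding K_def by blast
  have "column j (M ** Q) \<bullet> column l (M ** Q) = 0" if "j \<noteq> l" for j l
  proof (rule ccontr)
    define a where "a = M *v column j Q"
    define b where "b = M *v column l Q"
    assume "column j (M ** Q) \<bullet> column l (M ** Q) \<noteq> 0"
    then have "a \<bullet> b \<noteq> 0"
      by (simp add: a_def b_def column_matrix_mult)
    moreover have "r j - r l \<noteq> 0"
      using \<open>inj w\<close> that by (auto simp: r_def inj_def)
    ultimately obtain c s where cs: "c\<^sup>2 + s\<^sup>2 = 1"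
      and gain: "(r j - r l) * (s\<^sup>2 * ((norm b)\<^sup>2 - (norm a)\<^sup>2) + 2 * c * s * (a \<bullet> b)) > 0"
      using indefinite_form_on_unit_circle by blast
    have "rotate_columns j l c s Q \<in> K"
      using \<open>Q \<in> K\<close> cs that by (simp add: K_def orthogonal_matrix_rotate_columns)
    moreover have "g (rotate_columns j l c s Q) - g Q > 0"
      using gain weighted_column_norms_rotate_columns[OF that cs, where M=M and r=r]
      by (simp add: g_def a_def b_def)
    ultimately show False
      using Q_max by fastforce
  qed
  with \<open>Q \<in> K\<close> show thesis
    using that unfolding K_def by blast
qed

section \<open>Ellipsoids inside a polytope in coordinates\<close>

lemma orthogonal_transformation_matrix_vector_mult:
  fixes A :: "real^'n^'n"
  assumes "orthogonal_matrix A"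
  shows "orthogonal_transformation ((*v) A)"
  unfolding orthogonal_transformation_matrix
  using assms by (simp add: matrix_vector_mul_linear matrix_of_matrix_vector_mul)

lemma abs_det_orthogonal_columns:
  fixes X :: "real^'n^'n"
  assumes "\<And>j l. j \<noteq> l \<Longrightarrow> column j X \<bullet> column l X = 0"
  shows "\<bar>det X\<bar> = (\<Prod>j\<in>UNIV. norm (column j X))"
proof -
  have "transpose X ** X = (\<chi> i j. if i = j then (norm (column i X))\<^sup>2 else 0)"
    using assms by (simp add: matrix_mult_transpose_dot_column power2_norm_eq_inner vec_eq_iff)
  then have "det (transpose X ** X) = (\<Prod>j\<in>UNIV. norm (column j X))\<^sup>2"
    by (simp add: det_diagonal prod_power_distrib)
  moreover have "det (transpose X ** X) = (det X)\<^sup>2"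
    by (simp add: det_mul power2_eq_square)
  ultimately have "(det X)\<^sup>2 = (\<Prod>j\<in>UNIV. norm (column j X))\<^sup>2"
    by simp
  then show ?thesis
    by (metis real_sqrt_abs abs_of_nonneg prod_nonneg norm_ge_zero)
qed

lemma measure_affine_image_cball:
  fixes A :: "(real,'n::{finite,wellorder}) vec \<Rightarrow> (real,'n) vec"
  assumes "linear A"
  shows "measure lebesgue ((\<lambda>u. c + A u) ` cball 0 1)
           = \<bar>det (matrix A)\<bar> * measure lebesgue (ball (0::(real,'n) vec) 1)"
proof -
  have "(\<lambda>u. c + A u) ` cball 0 1 = (+) c ` A ` cball 0 1"
    by (simp add: image_image)
  then show ?thesis
    using assms by (simp add: measure_translation measure_linear_image content_cball_conv_ball)
qed

lemma abs_inner_le_convex_hull: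
  fixes u :: "'a::real_inner"
  assumes "\<And>x. x \<in> X \<Longrightarrow> \<bar>x \<bullet> u\<bar> \<le> t" and "p \<in> convex hull X"
  shows "\<bar>p \<bullet> u\<bar> \<le> t"
proof -
  have "convex hull X \<subseteq> {p. u \<bullet> p \<le> t} \<inter> {p. (- u) \<bullet> p \<le> t}"
    using assms(1) by (intro hull_minimal convex_Int convex_halfspace_le)
      (force simp: inner_commute abs_le_iff)+
  with assms(2) show ?thesis
    by (auto simp: inner_commute abs_le_iff)
qed

lemma inner_le_of_affine_ball_in_slab:
  fixes A :: "'a::real_inner \<Rightarrow> 'a"
  assumes "linear A" and "(\<lambda>v. c + A v) ` cball 0 1 \<subseteq> S"
    and "\<And>p. p \<in> S \<Longrightarrow> \<bar>p \<bullet> u\<bar> \<le> t" and "norm z \<le> 1"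
  shows "A z \<bullet> u \<le> t"
proof -
  have "c + A z \<in> S" "c + A (- z) \<in> S"
    using assms(2,4) by auto
  then have "\<bar>(c + A z) \<bullet> u\<bar> \<le> t" "\<bar>(c - A z) \<bullet> u\<bar> \<le> t"
    using assms(1,3) by (auto simp: linear_neg)
  then show ?thesis
    by (simp add: inner_add_left inner_diff_left abs_le_iff)
qed

lemma prod_le_sqrt_mean_square_power:
  fixes s :: "'n::finite \<Rightarrow> real"
  assumes "\<And>j. s j \<ge> 0"
  shows "(\<Prod>j\<in>UNIV. s j) \<le> sqrt ((\<Sum>j\<in>UNIV. (s j)\<^sup>2) / CARD('n)) ^ CARD('n)"
proof -
  define \<mu> where "\<mu> = (\<Sum>j\<in>UNIV. (s j)\<^sup>2) / CARD('n)"
  have "\<mu> \<ge> 0" by (simp add: \<mu>_def sum_nonneg)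
  have "root CARD('n) (\<Prod>j\<in>UNIV. (s j)\<^sup>2) \<le> \<mu>"
    using arith_geom_mean[of UNIV "\<lambda>j. (s j)\<^sup>2"]
    by (simp add: \<mu>_def sum_divide_distrib root_powr_inverse prod_nonneg)
  then have "root CARD('n) (\<Prod>j\<in>UNIV. (s j)\<^sup>2) ^ CARD('n) \<le> \<mu> ^ CARD('n)"
    by (intro power_mono) (simp_all add: prod_nonneg)
  moreover have "(sqrt \<mu> ^ CARD('n))\<^sup>2 = \<mu> ^ CARD('n)"
    using \<open>\<mu> \<ge> 0\<close> by (metis power_mult mult.commute real_sqrt_pow2)
  moreover have "(\<Prod>j\<in>UNIV. s j)\<^sup>2 = root CARD('n) (\<Prod>j\<in>UNIV. (s j)\<^sup>2) ^ CARD('n)"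
    by (simp add: prod_nonneg prod_power_distrib)
  ultimately have "(\<Prod>j\<in>UNIV. s j)\<^sup>2 \<le> (sqrt \<mu> ^ CARD('n))\<^sup>2"
    by simp
  then show ?thesis
    unfolding \<mu>_def by (rule power2_le_imp_le) (simp add: sum_nonneg)
qed

lemma orthogonal_matrix_normalize_columns:
  fixes X :: "real^'n^'n"
  assumes "\<And>j l. j \<noteq> l \<Longrightarrow> column j X \<bullet> column l X = 0" and "\<And>j. column j X \<noteq> 0"
  defines "W \<equiv> \<chi> i j. X $ i $ j / norm (column j X)"
  shows "orthogonal_matrix W" and "X *v y = W *v (\<chi> j. norm (column j X) * y $ j)"
proof -
  have "column j W = (1 / norm (column j X)) *\<^sub>R column j X" for j
    by (simp add: W_def column_def vec_eq_iff)
  then show "orthogonal_matrix W"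
    using assms(1,2) by (simp add: orthogonal_matrix_orthonormal_columns orthogonal_def)
  have "norm (column j X) \<noteq> 0" for j
    using assms(2) by simp
  then show "X *v y = W *v (\<chi> j. norm (column j X) * y $ j)"
    by (simp add: W_def matrix_vector_mult_def vec_eq_iff mult.commute del: norm_eq_zero)
qed

lemma exists_slab_containing_convex_hull:
  fixes W :: "real^'n^'n" and x :: "nat \<Rightarrow> real^'n"
  assumes m: "m \<ge> 1" and x: "\<And>i. i < m \<Longrightarrow> norm (x i) = 1" and W: "orthogonal_matrix W"
  obtains e where "\<And>j. \<bar>e $ j\<bar> = 1"
    and "\<And>p. p \<in> convex hull (x ` {..<m}) \<Longrightarrow> \<bar>p \<bullet> (W *v e)\<bar> \<le> sqrt (2 * ln (2 * real m))"
proof -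
  define a where "a i = transpose W *v x i" for i
  have "norm (a i) = 1" if "i < m" for i
    using x[OF that] W orthogonal_transformation_norm orthogonal_transformation_matrix_vector_mult
    by (metis a_def orthogonal_matrix_transpose)
  then obtain e :: "real^'n" where e: "\<And>j. \<bar>e $ j\<bar> = 1"
    and small: "\<And>i. i < m \<Longrightarrow> \<bar>a i \<bullet> e\<bar> \<le> sqrt (2 * ln (2 * real m))"
    using exists_sign_vector_small_inner[OF m] by blast
  have "x i \<bullet> (W *v e) = a i \<bullet> e" for i
    by (metis a_def dot_lmul_matrix transpose_transpose vector_transpose_matrix)
  then have "\<bar>p \<bullet> (W *v e)\<bar> \<le> sqrt (2 * ln (2 * real m))" if "p \<in> convex hull (x ` {..<m})" for p
    using small by (intro abs_inner_le_convex_hull[OF _ that]) auto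
  with e show thesis
    using that by blast
qed

lemma sum_norm_column_squared_le:
  fixes M Q :: "real^'n^'n" and x :: "nat \<Rightarrow> real^'n"
  assumes m: "m \<ge> 1" and x: "\<And>i. i < m \<Longrightarrow> norm (x i) = 1"
    and Q: "orthogonal_matrix Q"
    and orth: "\<And>j l. j \<noteq> l \<Longrightarrow> column j (M ** Q) \<bullet> column l (M ** Q) = 0"
    and nonzero: "\<And>j. column j (M ** Q) \<noteq> 0"
    and sub: "(\<lambda>v. c + M *v v) ` cball 0 1 \<subseteq> convex hull (x ` {..<m})"
  shows "(\<Sum>j\<in>UNIV. (norm (column j (M ** Q)))\<^sup>2) \<le> 2 * ln (2 * real m)"
proof -
  define \<sigma> where "\<sigma> j = norm (column j (M ** Q))" for j
  define W where "W = (\<chi> i j. (M ** Q) $ i $ j / \<sigma> j)"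
  have W: "orthogonal_matrix W" and MQ: "\<And>y. (M ** Q) *v y = W *v (\<chi> j. \<sigma> j * y $ j)"
    using orthogonal_matrix_normalize_columns[OF orth nonzero] by (simp_all add: W_def \<sigma>_def)
  obtain e where e: "\<And>j. \<bar>e $ j\<bar> = 1"
    and slab: "\<And>p. p \<in> convex hull (x ` {..<m}) \<Longrightarrow> \<bar>p \<bullet> (W *v e)\<bar> \<le> sqrt (2 * ln (2 * real m))"
    using exists_slab_containing_convex_hull[where x = x, OF m x W] by blast
  have e2: "(e $ j)\<^sup>2 = 1" for j
    using e[of j] by (metis abs_numeral power2_abs power_one numeral_One)
  define S where "S = (\<Sum>j\<in>UNIV. (\<sigma> j)\<^sup>2)"
  have "S > 0"
    unfolding S_def using nonzero by (intro sum_pos) (auto simp: \<sigma>_def)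
  define y where "y = (\<chi> j. e $ j * \<sigma> j / sqrt S)"
  have "norm (Q *v y) = norm y"
    using Q by (simp add: orthogonal_transformation_norm orthogonal_transformation_matrix_vector_mult)
  also have "\<dots> = 1"
    using \<open>S > 0\<close> e2 unfolding norm_vec_def L2_set_def y_def
    by (simp add: power_mult_distrib power_divide flip: sum_divide_distrib S_def)
  finally have "norm (Q *v y) = 1" .
  then have "(M *v (Q *v y)) \<bullet> (W *v e) \<le> sqrt (2 * ln (2 * real m))"
    using slab sub by (intro inner_le_of_affine_ball_in_slab[of "(*v) M"]) (auto simp: matrix_vector_mul_linear)
  moreover have "(M *v (Q *v y)) \<bullet> (W *v e) = sqrt S"
  proof -
    have "(M *v (Q *v y)) \<bullet> (W *v e) = (W *v (\<chi> j. \<sigma> j * y $ j)) \<bullet> (W *v e)"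
      by (simp add: matrix_vector_mul_assoc MQ)
    also have "\<dots> = (\<chi> j. \<sigma> j * y $ j) \<bullet> e"
      using orthogonal_transformation_matrix_vector_mult[OF W] by (simp add: orthogonal_transformation_def)
    also have "\<dots> = S / sqrt S"
      by (simp add: y_def inner_vec_def S_def sum_divide_distrib power2_eq_square algebra_simps
        e2[unfolded power2_eq_square])
    also have "\<dots> = sqrt S"
      using \<open>S > 0\<close> by (simp add: real_div_sqrt)
    finally show ?thesis .
  qed
  ultimately show ?thesis
    using m \<open>S > 0\<close> by (simp add: S_def \<sigma>_def real_sqrt_le_iff)
qed

lemma measure_ellipsoid_in_convex_hull_cart:
  fixes E :: "(real,'n::{finite,wellorder}) vec set" and x :: "nat \<Rightarrow> (real,'n) vec"
  assumes m: "m \<ge> 1" and x: "\<And>i. i < m \<Longrightarrow> norm (x i) = 1"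
    and "is_ellipsoid E" and E_sub: "E \<subseteq> convex hull (x ` {..<m})"
  shows "measure lebesgue E
           \<le> sqrt (2 * ln (2 * real m) / CARD('n)) ^ CARD('n) * measure lebesgue (ball (0::(real,'n) vec) 1)"
proof -
  obtain c and A :: "(real,'n) vec \<Rightarrow> (real,'n) vec"
    where A: "linear A" "inj A" and E: "E = (\<lambda>u. c + A u) ` cball 0 1"
    using \<open>is_ellipsoid E\<close> unfolding is_ellipsoid_def by blast
  define M where "M = matrix A"
  have A_M: "A v = M *v v" for v
    using A(1) by (simp add: M_def matrix_works)
  obtain Q where Q: "orthogonal_matrix Q"
    and orth: "\<And>j l. j \<noteq> l \<Longrightarrow> column j (M ** Q) \<bullet> column l (M ** Q) = 0"
    using exists_orthogonal_matrix_orthogonal_columns by blast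
  have "column j (M ** Q) \<noteq> 0" for j
  proof -
    have "column j Q \<noteq> 0"
      using Q by (metis orthogonal_matrix_orthonormal_columns norm_zero zero_neq_one)
    then show ?thesis
      using A by (auto simp: column_matrix_mult linear_injective_0 simp flip: A_M)
  qed
  then have sum_le: "(\<Sum>j\<in>UNIV. (norm (column j (M ** Q)))\<^sup>2) \<le> 2 * ln (2 * real m)"
    using E_sub by (intro sum_norm_column_squared_le[OF m x Q orth]) (auto simp: E A_M)
  have "\<bar>det M\<bar> = \<bar>det (M ** Q)\<bar>"
    using det_orthogonal_matrix[OF Q] by (auto simp: det_mul)
  also have "\<dots> = (\<Prod>j\<in>UNIV. norm (column j (M ** Q)))"
    using orth by (rule abs_det_orthogonal_columns)
  also have "\<dots> \<le> sqrt ((\<Sum>j\<in>UNIV. (norm (column j (M ** Q)))\<^sup>2) / CARD('n)) ^ CARD('n)"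
    by (rule prod_le_sqrt_mean_square_power) simp
  also have "\<dots> \<le> sqrt (2 * ln (2 * real m) / CARD('n)) ^ CARD('n)"
    using sum_le by (intro power_mono real_sqrt_le_mono divide_right_mono) (auto simp: sum_nonneg)
  finally show ?thesis
    unfolding E using A(1) by (simp add: measure_affine_image_cball M_def mult_right_mono)
qed

section \<open>Coordinates with respect to the standard basis\<close>

(* Volumes of linear images are available in the library only on real^'n for a finite,
   well-ordered index type 'n.  Indexing the standard basis of 'a by such a type identifies 'a
   isometrically with real^('a basis_index). *)
typedef (overloaded) ('a::euclidean_space) basis_index = "Basis :: 'a set"
  morphisms basis_vector basis_index
  using nonempty_Basis by blast

instance basis_index :: (euclidean_space) finite
proof
  have "UNIV = basis_index ` (Basis :: 'a set)"
    by (rule type_definition.univ[OF type_definition_basis_index])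
  then show "finite (UNIV :: 'a basis_index set)"
    by (metis finite_Basis finite_imageI)
qed

instantiation basis_index :: (euclidean_space) wellorder
begin

definition less_eq_basis_index :: "'a basis_index \<Rightarrow> 'a basis_index \<Rightarrow> bool"
  where "less_eq_basis_index i j \<longleftrightarrow> to_nat i \<le> to_nat j"

definition less_basis_index :: "'a basis_index \<Rightarrow> 'a basis_index \<Rightarrow> bool"
  where "less_basis_index i j \<longleftrightarrow> to_nat i < to_nat j"

instance
proof
  fix P :: "'a basis_index \<Rightarrow> bool" and a
  assume step: "\<And>i. (\<And>j. j < i \<Longrightarrow> P j) \<Longrightarrow> P i"
  show "P a"
    by (induction "to_nat a" arbitrary: a rule: less_induct) (rule step, auto simp: less_basis_index_def)
qed (auto simp: less_eq_basis_index_def less_basis_index_def)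

end

lemma range_basis_vector: "range basis_vector = Basis"
  by (rule type_definition.Rep_range[OF type_definition_basis_index])

lemma inj_basis_vector: "inj basis_vector"
  by (metis injI basis_vector_inject)

lemma card_basis_index: "CARD('a::euclidean_space basis_index) = DIM('a)"
  by (metis card_image inj_basis_vector range_basis_vector)

lemma inner_basis_vector: "basis_vector i \<bullet> basis_vector j = (if i = j then 1 else 0)"
  using basis_vector[of i] basis_vector[of j] basis_vector_inject[of i j] by (simp add: inner_Basis)

lemma sum_basis_vector: "(\<Sum>i\<in>UNIV. g (basis_vector i)) = (\<Sum>b\<in>Basis. g b)"
  by (metis inj_basis_vector range_basis_vector sum.reindex_cong)

lemma prod_basis_vector: "(\<Prod>i\<in>UNIV. g (basis_vector i)) = (\<Prod>b\<in>Basis. g b)"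
  by (metis inj_basis_vector range_basis_vector prod.reindex_cong)

definition coords :: "'a::euclidean_space \<Rightarrow> real^('a basis_index)" where
  "coords x = (\<chi> i. x \<bullet> basis_vector i)"

definition from_coords :: "real^('a::euclidean_space basis_index) \<Rightarrow> 'a" where
  "from_coords y = (\<Sum>i\<in>UNIV. y $ i *\<^sub>R basis_vector i)"

lemma coords_from_coords [simp]: "coords (from_coords y) = y"
  by (simp add: coords_def from_coords_def vec_eq_iff inner_sum_left inner_basis_vector if_distrib cong: if_cong)

lemma from_coords_coords [simp]: "from_coords (coords x) = x"
  using sum_basis_vector[of "\<lambda>b. (x \<bullet> b) *\<^sub>R b"]
  by (simp add: coords_def from_coords_def euclidean_representation)

lemma linear_coords: "linear coords"
  by (rule linearI) (simp_all add: coords_def vec_eq_iff inner_add_left)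

lemma linear_from_coords: "linear from_coords"
  by (rule linearI) (simp_all add: from_coords_def scaleR_add_left sum.distrib scaleR_sum_right)

lemma inj_coords: "inj coords"
  by (metis injI from_coords_coords)

lemma inj_from_coords: "inj from_coords"
  by (metis injI coords_from_coords)

lemma inner_coords: "coords x \<bullet> coords y = x \<bullet> y"
  using sum_basis_vector[of "\<lambda>b. (x \<bullet> b) * (y \<bullet> b)"]
  by (simp add: coords_def inner_vec_def euclidean_inner[of x y])

lemma norm_coords [simp]: "norm (coords x) = norm x"
  by (simp add: norm_eq_sqrt_inner inner_coords)

lemma norm_from_coords [simp]: "norm (from_coords y) = norm y"
  by (metis norm_coords coords_from_coords)

lemma coords_image_ball: "coords ` ball 0 r = ball 0 r"
  by (auto simp: image_iff) (metis coords_from_coords mem_ball_0 norm_from_coords)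

lemma from_coords_image_cball: "from_coords ` cball 0 r = cball 0 r"
  by (auto simp: image_iff) (metis from_coords_coords mem_cball_0 norm_coords)

lemma inner_from_coords_basis_vector: "from_coords y \<bullet> basis_vector i = y $ i"
  by (metis coords_def coords_from_coords vec_lambda_beta)

lemma prod_Basis_cart: "(\<Prod>b\<in>(Basis :: (real^'n) set). g b) = (\<Prod>i\<in>UNIV. g (axis i 1))"
proof -
  have Basis: "(Basis :: (real^'n) set) = range (\<lambda>i. axis i 1)"
    by (auto simp: Basis_vec_def)
  show ?thesis
    unfolding Basis by (subst prod.reindex) (auto simp: inj_def axis_eq_axis)
qed

lemma borel_measurable_coords: "coords \<in> borel_measurable borel"
  using linear_coords
  by (intro borel_measurable_continuous_onI linear_continuous_on) (simp add: linear_conv_bounded_linear)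

lemma borel_measurable_from_coords: "from_coords \<in> borel_measurable borel"
  using linear_from_coords
  by (intro borel_measurable_continuous_onI linear_continuous_on) (simp add: linear_conv_bounded_linear)

lemma lborel_distr_coords: "distr lborel borel (coords :: 'a::euclidean_space \<Rightarrow> _) = lborel"
proof (rule lborel_eqI[symmetric])
  fix l u :: "real^('a basis_index)"
  assume le: "\<And>b. b \<in> Basis \<Longrightarrow> l \<bullet> b \<le> u \<bullet> b"
  have "coords -` box l u = box (from_coords l) (from_coords u :: 'a)"
    by (auto simp: mem_box_cart mem_box coords_def inner_from_coords_basis_vector
        simp flip: range_basis_vector)
  moreover have "\<forall>b\<in>Basis. from_coords l \<bullet> b \<le> (from_coords u :: 'a) \<bullet> b"
  proof -
    have "l $ i \<le> u $ i" for i
      using le[of "axis i 1"] by (auto simp: Basis_vec_def inner_axis)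
    then show ?thesis
      by (auto simp: inner_from_coords_basis_vector simp flip: range_basis_vector)
  qed
  ultimately have "emeasure (distr lborel borel coords) (box l u)
                     = (\<Prod>b\<in>Basis. (from_coords u - from_coords l :: 'a) \<bullet> b)"
    using borel_measurable_coords[where 'a='a] by (simp add: emeasure_distr emeasure_lborel_box_eq)
  also have "\<dots> = (\<Prod>b\<in>Basis. (u - l) \<bullet> b)"
    by (simp add: prod_Basis_cart inner_diff_left inner_axis inner_from_coords_basis_vector
        flip: prod_basis_vector)
  finally show "emeasure (distr lborel borel coords) (box l u) = (\<Prod>b\<in>Basis. (u - l) \<bullet> b)" .
qed simp

lemma measure_coords_image:
  fixes S :: "'a::euclidean_space set"
  assumes "S \<in> sets borel"
  shows "measure lebesgue (coords ` S) = measure lebesgue S"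
proof -
  have "coords ` S = from_coords -` S"
    by (auto simp: image_iff) (metis coords_from_coords)
  then have "coords ` S \<in> sets borel"
    using measurable_sets_borel[OF borel_measurable_from_coords assms] by simp
  have "emeasure lborel (coords ` S) = emeasure (distr lborel borel coords) (coords ` S)"
    by (simp add: lborel_distr_coords)
  also have "\<dots> = emeasure lborel (coords -` coords ` S)"
    using borel_measurable_coords \<open>coords ` S \<in> sets borel\<close> by (subst emeasure_distr) auto
  also have "coords -` coords ` S = S"
    using inj_coords by (auto dest: injD)
  finally show ?thesis
    using assms \<open>coords ` S \<in> sets borel\<close> by (simp add: measure_def)
qed

lemma compact_ellipsoid:
  assumes "is_ellipsoid E"
  shows "compact E"
proof -
  obtain c and A :: "'a \<Rightarrow> 'a" where "linear A" and E: "E = (\<lambda>u. c + A u) ` cball 0 1"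
    using assms unfolding is_ellipsoid_def by blast
  then have "continuous_on (cball 0 1) (\<lambda>u. c + A u)"
    by (intro continuous_intros linear_continuous_on) (simp add: linear_conv_bounded_linear)
  then show ?thesis
    unfolding E by (intro compact_continuous_image) auto
qed

lemma is_ellipsoid_coords_image:
  assumes "is_ellipsoid E"
  shows "is_ellipsoid (coords ` E)"
proof -
  obtain c and A :: "'a \<Rightarrow> 'a" where A: "linear A" "inj A" and E: "E = (\<lambda>u. c + A u) ` cball 0 1"
    using assms unfolding is_ellipsoid_def by blast
  define A' where "A' = coords \<circ> A \<circ> from_coords"
  have "linear A'"
    unfolding A'_def using A(1) by (intro linear_compose linear_coords linear_from_coords)
  moreover have "inj A'"
    unfolding A'_def using A(2) by (intro inj_compose inj_coords inj_from_coords)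
  moreover have "coords ` E = (\<lambda>v. coords c + A' v) ` cball 0 1"
  proof -
    have "coords ` E = (\<lambda>u. coords c + coords (A u)) ` from_coords ` cball 0 1"
      by (simp add: E from_coords_image_cball image_image linear_add[OF linear_coords])
    then show ?thesis
      by (simp add: A'_def image_image)
  qed
  ultimately show ?thesis
    unfolding is_ellipsoid_def by blast
qed

lemma measure_ellipsoid_in_convex_hull:
  fixes x :: "nat \<Rightarrow> 'a::euclidean_space" and E :: "'a set"
  assumes m: "m \<ge> 1" and x: "\<And>i. i < m \<Longrightarrow> norm (x i) = 1"
    and "is_ellipsoid E" and E_sub: "E \<subseteq> convex hull (x ` {..<m})"
  shows "measure lebesgue E
           \<le> sqrt (2 * ln (2 * real m) / DIM('a)) ^ DIM('a) * measure lebesgue (ball (0::'a) 1)"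
proof -
  have hull: "coords ` E \<subseteq> convex hull ((coords \<circ> x) ` {..<m})"
    using image_mono[OF E_sub, of coords] by (simp add: convex_hull_linear_image linear_coords image_comp)
  have "measure lebesgue E = measure lebesgue (coords ` E)"
    using \<open>is_ellipsoid E\<close> by (simp add: measure_coords_image compact_ellipsoid borel_compact)
  also have "\<dots> \<le> sqrt (2 * ln (2 * real m) / CARD('a basis_index)) ^ CARD('a basis_index)
                   * measure lebesgue (ball (0::real^'a basis_index) 1)"
    using x is_ellipsoid_coords_image[OF \<open>is_ellipsoid E\<close>] hull
    by (intro measure_ellipsoid_in_convex_hull_cart[OF m]) simp_all
  also have "\<dots> = sqrt (2 * ln (2 * real m) / DIM('a)) ^ DIM('a) * measure lebesgue (ball (0::'a) 1)"
    using measure_coords_image[of "ball (0::'a) 1"] by (simp add: card_basis_index coords_image_ball)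
  finally show ?thesis .
qed

theorem lemma5:
  fixes x :: "nat \<Rightarrow> 'a::euclidean_space" and m :: nat and E :: "'a set"
  assumes "m \<ge> 1"
    and "\<And>i. i < m \<Longrightarrow> norm (x i) = 1"
    and "max_vol_ellipsoid (convex hull (x ` {..<m})) E"
  shows "measure lebesgue E \<le>
    2 * sqrt (2 * exp 1) * (sqrt (2 * ln (2 * real m) / real DIM('a))) ^ DIM('a)
      * measure lebesgue (ball (0::'a) 1)"
proof -
  have "is_ellipsoid E" and "E \<subseteq> convex hull (x ` {..<m})"
    using assms(3) by (simp_all add: max_vol_ellipsoid_def)
  then have bound: "measure lebesgue E
      \<le> sqrt (2 * ln (2 * real m) / DIM('a)) ^ DIM('a) * measure lebesgue (ball (0::'a) 1)"
    using assms(1,2) measure_ellipsoid_in_convex_hull by blast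
  have "1 \<le> sqrt (2 * exp (1::real))"
    using exp_ge_add_one_self[of "1::real"] by (intro real_sqrt_ge_one) linarith
  then have slack: "1 \<le> 2 * sqrt (2 * exp (1::real))"
    by linarith
  have "0 \<le> sqrt (2 * ln (2 * real m) / DIM('a)) ^ DIM('a) * measure lebesgue (ball (0::'a) 1)"
    using assms(1) by simp
  then show ?thesis
    using bound mult_right_mono[OF slack] by (fastforce simp: mult.assoc)
qed

end
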